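(* Let $m,n\ge1$, $A,B\in\mathbb{R}_+^{m\times n}$, and suppose $\hat\rho(A,B)<\infty$. Write $t_0=\hat\rho(A,B)$. (1) If $\mathbf{y}\in\mathbb{R}^n_+\setminus\{\mathbf{0}\}$ is weakly optimal, then at least one coordinate of $(A-t_0B)\mathbf{y}$ is zero. (2) Suppose $\mathbf{y}$ is weakly optimal with exactly $\ell$ positive coordinates, and let $A',B'\in\mathbb{R}_+^{m\times\ell}$ be the submatrices of $A,B$ formed by the columns indexed by $\operatorname{supp}\mathbf{y}$. If $\ell\ge m$, then $\operatorname{rank}(A'-t_0B')<m$. (3) Every minimal weakly optimal vector has at most $m$ positive coordinates. (4) If $\mathbf{y}$ is minimal weakly optimal with exactly $m$ positive coordinates, then $\mathbf{y}$ is a weak GPF-eigenvector, i.e. $A\mathbf{y}=t_0B\mathbf{y}$, and $\operatorname{rank}(A'-t_0B')=m-1$, with $A',B'$ as in (2). (5) If $\mathbf{y}'$ is minimal weakly optimal with $\ell<m$ positive coordinates, then there exists a minimal weakly optimal $\mathbf{y}$ with $\operatorname{supp}\mathbf{y}=\operatorname{supp}\mathbf{y}'$ such that the set $\mathcal{K}=\{k\in[m]:(A\mathbf{y})_k=t_0(B\mathbf{y})_k\}$ has $|\mathcal{K}|\ge\ell$.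
   Context: $[m]=\{1,\dots,m\}$. For $A,B\in\mathbb{R}_+^{m\times n}$ (entrywise nonnegative real matrices) and $\mathbf{x}\in\mathbb{R}^n_+\setminus\{\mathbf{0}\}$, set $r(A,B,\mathbf{x})=\max_{i\in[m]}\frac{(A\mathbf{x})_i}{(B\mathbf{x})_i}\in[0,\infty]$ with the conventions $\frac00=0$ and $\frac c0=\infty$ for $c>0$; equivalently $r(A,B,\mathbf{x})=\inf\{t\ge 0: A\mathbf{x}\le tB\mathbf{x}\}$. The weak Collatz–Wielandt quotient is $\hat\rho(A,B)=\inf\{r(A,B,\mathbf{x}):\mathbf{x}\in\mathbb{R}^n_+\setminus\{\mathbf{0}\}\}$. A vector $\mathbf{y}\in\mathbb{R}^n_+\setminus\{\mathbf{0}\}$ is weakly optimal if $r(A,B,\mathbf{y})=\hat\rho(A,B)$; it is minimal weakly optimal if it is weakly optimal and no weakly optimal vector has support strictly contained in $\operatorname{supp}\mathbf{y}=\{j:y_j>0\}$. A weak GPF-eigenvector is $\mathbf{y}\in\mathbb{R}^n_+\setminus\{\mathbf{0}\}$ with $A\mathbf{y}=\hat\rho(A,B)B\mathbf{y}$. *)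

theory Defs
  imports "Jordan_Normal_Form.DL_Rank" "Jordan_Normal_Form.DL_Submatrix"
          "HOL-Library.Extended_Real"
begin

definition nonneg_mat :: "real mat \<Rightarrow> bool" where
  "nonneg_mat A \<longleftrightarrow> (\<forall>i < dim_row A. \<forall>j < dim_col A. 0 \<le> A $$ (i,j))"

definition nonneg_vec :: "real vec \<Rightarrow> bool" where
  "nonneg_vec x \<longleftrightarrow> (\<forall>j < dim_vec x. 0 \<le> x $ j)"

text \<open>Quotient c/d in [0,\<infinity>] with conventions 0/0 = 0 and c/0 = \<infinity> for c > 0.\<close>
definition equot :: "real \<Rightarrow> real \<Rightarrow> ereal" where
  "equot c d = (if d = 0 then (if c = 0 then 0 else \<infinity>) else ereal (c / d))"

definition rCW :: "real mat \<Rightarrow> real mat \<Rightarrow> real vec \<Rightarrow> ereal" where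
  "rCW A B x = Max ((\<lambda>i. equot ((A *\<^sub>v x) $ i) ((B *\<^sub>v x) $ i)) ` {..<dim_row A})"

definition admissible :: "real mat \<Rightarrow> real vec \<Rightarrow> bool" where
  "admissible A x \<longleftrightarrow> x \<in> carrier_vec (dim_col A) \<and> nonneg_vec x \<and> x \<noteq> 0\<^sub>v (dim_col A)"

definition rho_hat :: "real mat \<Rightarrow> real mat \<Rightarrow> ereal" where
  "rho_hat A B = (INF x \<in> {x. admissible A x}. rCW A B x)"

definition supp :: "real vec \<Rightarrow> nat set" where
  "supp y = {j. j < dim_vec y \<and> 0 < y $ j}"

definition weakly_optimal :: "real mat \<Rightarrow> real mat \<Rightarrow> real vec \<Rightarrow> bool" where
  "weakly_optimal A B y \<longleftrightarrow> admissible A y \<and> rCW A B y = rho_hat A B"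

definition minimal_weakly_optimal :: "real mat \<Rightarrow> real mat \<Rightarrow> real vec \<Rightarrow> bool" where
  "minimal_weakly_optimal A B y \<longleftrightarrow> weakly_optimal A B y \<and>
     \<not> (\<exists>z. weakly_optimal A B z \<and> supp z \<subset> supp y)"

definition weak_GPF_eigenvector :: "real mat \<Rightarrow> real mat \<Rightarrow> real vec \<Rightarrow> bool" where
  "weak_GPF_eigenvector A B y \<longleftrightarrow> admissible A y \<and>
     rho_hat A B < \<infinity> \<and> A *\<^sub>v y = real_of_ereal (rho_hat A B) \<cdot>\<^sub>v (B *\<^sub>v y)"

definition col_submatrix :: "real mat \<Rightarrow> nat set \<Rightarrow> real mat" where
  "col_submatrix A J = submatrix A {..<dim_row A} J"

end

theory Submission
  imports Defs "Jordan_Normal_Form.DL_Rank_Submatrix"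
begin

text \<open>
  Let t0 be the weak Collatz--Wielandt quotient and M = A - t0 B. An admissible x is weakly
  optimal iff M x \<le> 0, and no admissible x has M x < 0. For a weakly optimal y with support S
  and active rows K = {i. (M y)_i = 0} this has two consequences. First, no z supported on S
  has (M z)_i < 0 for all i \<in> K (perturb y slightly along z), so the K \<times> S submatrix of M is
  not surjective: its rank is < |K|. Second, if y is minimal weakly optimal and its active set
  is as large as possible among weakly optimal vectors with support S, then every z supported
  on S with (M z)_K = 0 is a multiple of y: otherwise move from y along \<plusminus>z until a
  coordinate or a slack row reaches zero, which shrinks the support or enlarges the active set.
  So the kernel of that submatrix is at most one-dimensional and |S| - 1 \<le> rank < |K| \<le> m.
  Statement (1) says K \<noteq> {}, (2) is the rank bound with all m rows, (3) and (5) follow from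
  |S| \<le> |K|, and for |S| = m the active set is all of [m], so the kernel of M contains a
  vector with support S, which must be a multiple of y.
\<close>

lemma equot_nonneg: "0 \<le> c \<Longrightarrow> 0 \<le> d \<Longrightarrow> 0 \<le> equot c d"
  unfolding equot_def by auto

lemma equot_le_iff:
  assumes "0 \<le> c" "0 \<le> d" "0 \<le> t"
  shows "equot c d \<le> ereal t \<longleftrightarrow> c \<le> t * d"
  using assms by (auto simp: equot_def field_simps)

lemma equot_less:
  assumes "0 \<le> c" "0 \<le> d" "c < t * d"
  shows "equot c d < ereal t"
  using assms by (auto simp: equot_def field_simps)

lemma mult_mat_vec_nonneg:
  assumes "A \<in> carrier_mat m n" "nonneg_mat A" "x \<in> carrier_vec n" "nonneg_vec x" "i < m"
  shows "0 \<le> (A *\<^sub>v x) $ i"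
  using assms unfolding nonneg_mat_def nonneg_vec_def
  by (auto simp: mult_mat_vec_def scalar_prod_def intro!: sum_nonneg)

lemma first_zero_crossing:
  fixes a b :: "'k \<Rightarrow> real"
  assumes "finite K" "K \<noteq> {}" and pos: "\<And>k. k \<in> K \<Longrightarrow> 0 < a k \<and> b k < 0"
  obtains s where "0 < s" "\<And>k. k \<in> K \<Longrightarrow> 0 \<le> a k + s * b k" "\<exists>k\<in>K. a k + s * b k = 0"
proof
  let ?s = "Min ((\<lambda>k. a k / - b k) ` K)"
  have "0 < a k / - b k" if "k \<in> K" for k
    using pos[OF that] by (intro divide_pos_pos) auto
  then show "0 < ?s"
    using assms(1,2) by (subst Min_gr_iff) auto
  show "0 \<le> a k + ?s * b k" if "k \<in> K" for k
  proof -
    have "?s \<le> a k / - b k" using assms(1) that by simp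
    then have "?s * - b k \<le> a k"
      using pos_le_divide_eq[of "- b k" ?s "a k"] pos[OF that] by simp
    then show ?thesis by (simp add: algebra_simps)
  qed
  have "?s \<in> (\<lambda>k. a k / - b k) ` K"
    using assms(1,2) by (intro Min_in) auto
  then obtain k where "k \<in> K" "?s = a k / - b k" by blast
  moreover have "b k \<noteq> 0" using pos \<open>k \<in> K\<close> by force
  ultimately show "\<exists>k\<in>K. a k + ?s * b k = 0" by (intro bexI[of _ k]) (simp_all add: field_simps)
qed

lemma eventually_pos_affine:
  fixes a b :: "'k \<Rightarrow> real"
  assumes "finite K" and pos: "\<And>k. k \<in> K \<Longrightarrow> 0 < a k"
  shows "\<forall>\<^sub>F e in at_right 0. \<forall>k\<in>K. 0 < a k + e * b k"
  using assms(1)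
proof (rule eventually_ball_finite, intro ballI)
  fix k assume "k \<in> K"
  have "((\<lambda>e. a k + e * b k) \<longlongrightarrow> a k + 0 * b k) (at_right 0)"
    by (intro tendsto_intros)
  then show "\<forall>\<^sub>F e in at_right 0. 0 < a k + e * b k"
    using order_tendstoD(1)[of _ "a k"] pos[OF \<open>k \<in> K\<close>] by simp
qed

lemma add_smult_eq_zero_vec:
  fixes y z :: "real vec"
  assumes "y \<in> carrier_vec n" "z \<in> carrier_vec n" "s \<noteq> 0" "y + s \<cdot>\<^sub>v z = 0\<^sub>v n"
  shows "z = (- 1 / s) \<cdot>\<^sub>v y"
proof (rule eq_vecI)
  fix i assume "i < dim_vec ((- 1 / s) \<cdot>\<^sub>v y)"
  then have i: "i < n" using assms(1) by simp
  have "y $ i + s * z $ i = 0" using arg_cong[OF assms(4), of "\<lambda>v. v $ i"] assms(1,2) i by simp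
  then have "s * z $ i = - y $ i" by linarith
  then show "z $ i = ((- 1 / s) \<cdot>\<^sub>v y) $ i" using assms(1,3) i by (simp add: field_simps)
qed (use assms in simp)

section \<open>Submatrices, zero padding and rank\<close>

lemma card_less_in_set_less:
  assumes "finite S" "i \<in> S"
  shows "card {a\<in>S. a < i} < card (S :: nat set)"
  using assms by (intro psubset_card_mono) auto

lemma bij_betw_pick:
  assumes "finite S"
  shows "bij_betw (pick S) {..<card S} S"
proof -
  have inj: "inj_on (pick S) {..<card S}"
    by (rule strict_mono_on_imp_inj_on) (auto intro: strict_mono_onI pick_mono)
  moreover have sub: "pick S ` {..<card S} \<subseteq> S"
    using pick_in_set by auto
  moreover have "card (pick S ` {..<card S}) = card S"
    using card_image[OF inj] by simp
  ultimately show ?thesis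
    unfolding bij_betw_def using card_subset_eq[OF assms sub] by blast
qed

lemma submatrix_carrier_mat:
  "N \<in> carrier_mat r c \<Longrightarrow>
   submatrix N R S \<in> carrier_mat (card {i. i < r \<and> i \<in> R}) (card {j. j < c \<and> j \<in> S})"
  unfolding carrier_mat_def by (simp add: dim_submatrix)

definition embed_vec :: "nat \<Rightarrow> nat set \<Rightarrow> real vec \<Rightarrow> real vec" where
  "embed_vec c S u = vec c (\<lambda>j. if j \<in> S then u $ card {a\<in>S. a < j} else 0)"

lemma embed_vec_carrier [simp]: "embed_vec c S u \<in> carrier_vec c"
  and dim_embed_vec [simp]: "dim_vec (embed_vec c S u) = c"
  unfolding embed_vec_def by simp_all

lemma embed_vec_outside: "j < c \<Longrightarrow> j \<notin> S \<Longrightarrow> embed_vec c S u $ j = 0"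
  unfolding embed_vec_def by simp

lemma embed_vec_pick:
  assumes "S \<subseteq> {..<c}" "k < card S"
  shows "embed_vec c S u $ pick S k = u $ k"
proof -
  have "pick S k \<in> S" using pick_in_set assms(2) by blast
  then show ?thesis
    using assms card_pick[of k S] unfolding embed_vec_def by auto
qed

lemma submatrix_mult_embed_vec:
  fixes N :: "real mat"
  assumes N: "N \<in> carrier_mat r c" and S: "S \<subseteq> {..<c}" and u: "u \<in> carrier_vec (card S)"
    and k: "k < card {i. i < r \<and> i \<in> R}"
  shows "(submatrix N R S *\<^sub>v u) $ k = (N *\<^sub>v embed_vec c S u) $ pick R k"
proof -
  have fin: "finite S" using S finite_subset by blast
  have cS: "{j. j < c \<and> j \<in> S} = S" using S by auto
  have p: "pick R k < r" using pick_le k by blast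
  have "(N *\<^sub>v embed_vec c S u) $ pick R k = (\<Sum>j\<in>{0..<c}. N $$ (pick R k, j) * embed_vec c S u $ j)"
    using N p by (auto simp: scalar_prod_def intro!: sum.cong)
  also have "\<dots> = (\<Sum>j\<in>S. N $$ (pick R k, j) * embed_vec c S u $ j)"
    by (rule sum.mono_neutral_right) (use S fin embed_vec_outside in auto)
  also have "\<dots> = (\<Sum>l<card S. N $$ (pick R k, pick S l) * embed_vec c S u $ pick S l)"
    by (rule sum.reindex_bij_betw[OF bij_betw_pick[OF fin], symmetric])
  also have "\<dots> = (\<Sum>l<card S. submatrix N R S $$ (k, l) * u $ l)"
    using N k cS by (intro sum.cong) (auto simp: embed_vec_pick[OF S] submatrix_index)
  also have "\<dots> = (submatrix N R S *\<^sub>v u) $ k"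
    using N k u cS by (simp add: mult_mat_vec_def scalar_prod_def dim_submatrix lessThan_atLeast0)
  finally show ?thesis by simp
qed

context vec_space
begin

lemma exists_maximal_lin_indpt_cols:
  obtains S where "maximal S (\<lambda>T. T \<subseteq> set (cols X) \<and> lin_indpt T)"
  using maximal_exists[of "\<lambda>T. T \<subseteq> set (cols X) \<and> lin_indpt T" "card (set (cols X))" "{}"]
  by (meson List.finite_set card_mono empty_iff empty_subsetI finite_lin_indpt2 rev_finite_subset)

lemma rank_le_dim_row:
  assumes X: "X \<in> carrier_mat n nc"
  shows "rank X \<le> n"
proof -
  obtain S where S: "maximal S (\<lambda>T. T \<subseteq> set (cols X) \<and> lin_indpt T)"
    using exists_maximal_lin_indpt_cols .
  have "S \<subseteq> set (cols X)" "lin_indpt S" using S unfolding maximal_def by auto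
  moreover have "set (cols X) \<subseteq> carrier_vec n" using X cols_dim by blast
  ultimately have "card S \<le> dim" using li_le_dim(2)[of S] by auto
  then show ?thesis using rank_card_indpt[OF X S] dim_is_n by simp
qed

lemma full_rank_imp_solvable:
  assumes X: "X \<in> carrier_mat n nc" and r: "rank X = n" and b: "b \<in> carrier_vec n"
  obtains u where "u \<in> carrier_vec nc" "X *\<^sub>v u = b"
proof -
  obtain S where S: "maximal S (\<lambda>T. T \<subseteq> set (cols X) \<and> lin_indpt T)"
    using exists_maximal_lin_indpt_cols .
  have sub: "S \<subseteq> set (cols X)" and li: "lin_indpt S" using S unfolding maximal_def by auto
  have cols: "set (cols X) \<subseteq> carrier_vec n" using X cols_dim by blast
  have "finite S" using sub finite_subset by blast
  moreover have "card S = n" using rank_card_indpt[OF X S] r by simp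
  ultimately have "basis S"
    by (intro dim_li_is_basis) (use sub cols li dim_is_n in auto)
  then have "carrier_vec n \<subseteq> span (set (cols X))"
    using span_is_monotone[OF sub] unfolding basis_def by simp
  then have "b \<in> col_space X" using b unfolding col_space_def by auto
  then show ?thesis using that col_space_eq[OF X] X by auto
qed

lemma rank_col_submatrix_le:
  assumes X: "X \<in> carrier_mat n nc"
  shows "rank (submatrix X UNIV J) \<le> rank X"
proof -
  let ?Y = "submatrix X UNIV J"
  have Y: "?Y \<in> carrier_mat n (dim_col ?Y)"
    using X unfolding carrier_mat_def by (simp add: dim_submatrix)
  obtain S where S: "maximal S (\<lambda>T. T \<subseteq> set (cols ?Y) \<and> lin_indpt T)"
    using exists_maximal_lin_indpt_cols .
  have SY: "S \<subseteq> set (cols ?Y)" and li: "lin_indpt S" using S unfolding maximal_def by auto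
  have "S \<subseteq> set (cols X)" using SY cols_submatrix_subset[of X J] by (rule subset_trans)
  then have "card S \<le> rank X" using rank_ge_card_indpt[OF X _ li] by blast
  then show ?thesis using rank_card_indpt[OF Y S] by simp
qed

end

lemma mult_unit_vec_eq_col:
  fixes X :: "'a :: semiring_1 mat"
  assumes "X \<in> carrier_mat r c" "a < c"
  shows "X *\<^sub>v unit_vec c a = col X a"
proof (rule eq_vecI)
  fix i assume "i < dim_vec (col X a)"
  then show "(X *\<^sub>v unit_vec c a) $ i = col X a $ i"
    using assms scalar_prod_right_unit[OF assms(2), of "row X i"] by simp
qed (use assms in simp)

lemma kernel_nonzero_if_not_distinct:
  fixes X :: "real mat"
  assumes X: "X \<in> carrier_mat r c" and nd: "\<not> distinct (cols X)"
  obtains v where "v \<in> carrier_vec c" "v \<noteq> 0\<^sub>v c" "X *\<^sub>v v = 0\<^sub>v r"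
proof -
  obtain a b where ab: "a < c" "b < c" "a \<noteq> b" "cols X ! a = cols X ! b"
    using nd X distinct_conv_nth cols_length by (metis carrier_matD(2))
  then have "col X a = col X b" using X by (metis carrier_matD(2) cols_nth)
  define v :: "real vec" where "v = unit_vec c a - unit_vec c b"
  have "v $ a = 1" using ab unfolding v_def by simp
  then have "v \<noteq> 0\<^sub>v c" using ab by (metis index_zero_vec(1) zero_neq_one)
  moreover have "X *\<^sub>v v = 0\<^sub>v r"
  proof -
    have "X *\<^sub>v v = col X a - col X b"
      using X ab unfolding v_def by (simp add: mult_minus_distrib_mat_vec mult_unit_vec_eq_col)
    then show ?thesis using ab X \<open>col X a = col X b\<close> by simp
  qed
  ultimately show ?thesis using that[of v] unfolding v_def by simp
qed

lemma kernel_nonzero_if_rank_less: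
  fixes X :: "real mat"
  assumes X: "X \<in> carrier_mat r c" and rk: "vec_space.rank r X < c"
  obtains v where "v \<in> carrier_vec c" "v \<noteq> 0\<^sub>v c" "X *\<^sub>v v = 0\<^sub>v r"
proof (cases "distinct (cols X)")
  case True
  then have "module.lin_dep class_ring (module_vec TYPE(real) r) (set (cols X))"
    using vec_space.lin_indpt_full_rank[OF X] rk by auto
  then show ?thesis using vec_space.lin_depE[OF X _ True] that by blast
next
  case False
  then show ?thesis using kernel_nonzero_if_not_distinct[OF X] that by blast
qed

lemma kernel_vanishing_last_if_rank_less:
  fixes X :: "real mat"
  assumes X: "X \<in> carrier_mat r c" and rk: "vec_space.rank r X < c - 1"
  obtains u where "u \<in> carrier_vec c" "u \<noteq> 0\<^sub>v c" "u $ (c - 1) = 0" "X *\<^sub>v u = 0\<^sub>v r"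
proof -
  let ?J = "{..<c - 1}"
  let ?Y = "submatrix X UNIV ?J"
  have J: "?J \<subseteq> {..<c}" by auto
  have pickJ: "pick ?J k = k" if "k < c - 1" for k
  proof -
    have "{a\<in>?J. a < k} = {..<k}" using that by auto
    then show ?thesis using pick_card_in_set[of k ?J] that by simp
  qed
  have "{i. i < r \<and> i \<in> UNIV} = {..<r}" "{j. j < c \<and> j \<in> ?J} = ?J" by auto
  then have Y: "?Y \<in> carrier_mat r (c - 1)"
    using submatrix_carrier_mat[OF X, of UNIV ?J] by (simp only: card_lessThan)
  have "vec_space.rank r ?Y < c - 1"
    using vec_space.rank_col_submatrix_le[OF X] rk le_less_trans by blast
  then obtain v where v: "v \<in> carrier_vec (c - 1)" "v \<noteq> 0\<^sub>v (c - 1)" "?Y *\<^sub>v v = 0\<^sub>v r"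
    using kernel_nonzero_if_rank_less[OF Y] by blast
  define u where "u = embed_vec c ?J v"
  have u_pick: "u $ k = v $ k" if "k < c - 1" for k
    using embed_vec_pick[OF J, of k v] that pickJ[OF that] unfolding u_def by simp
  have "X *\<^sub>v u = 0\<^sub>v r"
  proof (rule eq_vecI)
    fix i assume "i < dim_vec (0\<^sub>v r)"
    then have "(?Y *\<^sub>v v) $ i = (X *\<^sub>v u) $ i"
      using submatrix_mult_embed_vec[OF X J _, of v i UNIV] v X
      unfolding u_def by (simp add: pick_UNIV)
    then show "(X *\<^sub>v u) $ i = 0\<^sub>v r $ i" using v(3) by simp
  qed (use X in simp)
  moreover have "u $ (c - 1) = 0"
    unfolding u_def using rk by (intro embed_vec_outside) auto
  moreover have "u \<noteq> 0\<^sub>v c"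
  proof
    assume "u = 0\<^sub>v c"
    then have "v = 0\<^sub>v (c - 1)" using v(1) u_pick by (intro eq_vecI) auto
    then show False using v(2) by simp
  qed
  ultimately show ?thesis using that[of u] embed_vec_carrier unfolding u_def by blast
qed

section \<open>Weakly optimal vectors\<close>

locale cw_setting =
  fixes A B :: "real mat" and m n :: nat
  assumes m_pos: "1 \<le> m"
    and A_carrier: "A \<in> carrier_mat m n" and B_carrier: "B \<in> carrier_mat m n"
    and A_nonneg: "nonneg_mat A" and B_nonneg: "nonneg_mat B"
    and rho_hat_finite: "rho_hat A B < \<infinity>"
begin

definition t0 :: real where "t0 = real_of_ereal (rho_hat A B)"

definition M :: "real mat" where "M = A - t0 \<cdot>\<^sub>m B"

definition active :: "real vec \<Rightarrow> nat set" where
  "active x = {i. i < m \<and> (M *\<^sub>v x) $ i = 0}"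

lemma dim_row_A [simp]: "dim_row A = m" and dim_col_A [simp]: "dim_col A = n"
  using A_carrier by auto

lemma lessThan_m_nonempty: "{..<m} \<noteq> {}"
proof -
  have "0 \<in> {..<m}" using m_pos by simp
  then show ?thesis by blast
qed

lemma admissible_iff: "admissible A x \<longleftrightarrow> x \<in> carrier_vec n \<and> nonneg_vec x \<and> x \<noteq> 0\<^sub>v n"
  unfolding admissible_def by simp

lemma M_carrier: "M \<in> carrier_mat m n"
  using A_carrier B_carrier unfolding M_def carrier_mat_def by auto

lemma M_mult_vec_index:
  assumes "x \<in> carrier_vec n" "i < m"
  shows "(M *\<^sub>v x) $ i = (A *\<^sub>v x) $ i - t0 * (B *\<^sub>v x) $ i"
proof -
  have "(\<Sum>j<n. (A $$ (i, j) - t0 * B $$ (i, j)) * x $ j) =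
        (\<Sum>j<n. A $$ (i, j) * x $ j) - t0 * (\<Sum>j<n. B $$ (i, j) * x $ j)"
    by (simp add: algebra_simps sum_subtractf sum_distrib_left)
  then show ?thesis
    using assms A_carrier B_carrier
    by (simp add: M_def mult_mat_vec_def scalar_prod_def lessThan_atLeast0)
qed

lemma eigen_iff_M_kernel:
  assumes "x \<in> carrier_vec n"
  shows "A *\<^sub>v x = t0 \<cdot>\<^sub>v (B *\<^sub>v x) \<longleftrightarrow> (\<forall>i<m. (M *\<^sub>v x) $ i = 0)"
proof -
  have "A *\<^sub>v x = t0 \<cdot>\<^sub>v (B *\<^sub>v x) \<longleftrightarrow> (\<forall>i<m. (A *\<^sub>v x) $ i = t0 * (B *\<^sub>v x) $ i)"
    using A_carrier B_carrier by (auto simp: vec_eq_iff)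
  then show ?thesis using M_mult_vec_index[OF assms] by auto
qed

lemma M_mult_add_smult:
  assumes "x \<in> carrier_vec n" "z \<in> carrier_vec n" "i < m"
  shows "(M *\<^sub>v (x + s \<cdot>\<^sub>v z)) $ i = (M *\<^sub>v x) $ i + s * (M *\<^sub>v z) $ i"
  using assms M_carrier by (simp add: mult_add_distrib_mat_vec mult_mat_vec)

lemma rCW_nonneg:
  assumes "admissible A x"
  shows "0 \<le> rCW A B x"
proof -
  have "0 \<le> equot ((A *\<^sub>v x) $ 0) ((B *\<^sub>v x) $ 0)"
    using assms m_pos A_carrier B_carrier A_nonneg B_nonneg
    by (intro equot_nonneg mult_mat_vec_nonneg) (auto simp: admissible_iff)
  also have "\<dots> \<le> rCW A B x"
    unfolding rCW_def using m_pos by (intro Max_ge) auto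
  finally show ?thesis .
qed

lemma rho_hat_le_rCW: "admissible A x \<Longrightarrow> rho_hat A B \<le> rCW A B x"
  unfolding rho_hat_def by (rule INF_lower) simp

lemma rho_hat_eq: "rho_hat A B = ereal t0" and t0_nonneg: "0 \<le> t0"
proof -
  have "0 \<le> rho_hat A B"
    unfolding rho_hat_def using rCW_nonneg by (auto intro: INF_greatest)
  then show "rho_hat A B = ereal t0" "0 \<le> t0"
    using rho_hat_finite unfolding t0_def by (cases "rho_hat A B"; simp)+
qed

lemma rCW_le_iff:
  assumes x: "admissible A x"
  shows "rCW A B x \<le> ereal t0 \<longleftrightarrow> (\<forall>i<m. (M *\<^sub>v x) $ i \<le> 0)"
proof -
  have x_carrier: "x \<in> carrier_vec n" and x_nonneg: "nonneg_vec x"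
    using x by (simp_all add: admissible_iff)
  have "equot ((A *\<^sub>v x) $ i) ((B *\<^sub>v x) $ i) \<le> ereal t0 \<longleftrightarrow> (M *\<^sub>v x) $ i \<le> 0"
    if "i < m" for i
    using equot_le_iff[OF mult_mat_vec_nonneg[OF A_carrier A_nonneg x_carrier x_nonneg that]
        mult_mat_vec_nonneg[OF B_carrier B_nonneg x_carrier x_nonneg that] t0_nonneg]
      M_mult_vec_index[OF x_carrier that] by (simp add: mult.commute)
  moreover have "rCW A B x \<le> ereal t0 \<longleftrightarrow>
      (\<forall>i<m. equot ((A *\<^sub>v x) $ i) ((B *\<^sub>v x) $ i) \<le> ereal t0)"
    unfolding rCW_def using lessThan_m_nonempty by (subst Max_le_iff) auto
  ultimately show ?thesis by simp
qed

lemma admissible_not_descent: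
  assumes x: "admissible A x"
  shows "\<exists>i<m. 0 \<le> (M *\<^sub>v x) $ i"
proof (rule ccontr)
  have x_carrier: "x \<in> carrier_vec n" and x_nonneg: "nonneg_vec x"
    using x by (simp_all add: admissible_iff)
  assume descent: "\<not> ?thesis"
  have "equot ((A *\<^sub>v x) $ i) ((B *\<^sub>v x) $ i) < ereal t0" if "i < m" for i
  proof (rule equot_less)
    show "0 \<le> (A *\<^sub>v x) $ i" "0 \<le> (B *\<^sub>v x) $ i"
      using mult_mat_vec_nonneg[OF A_carrier A_nonneg x_carrier x_nonneg that]
        mult_mat_vec_nonneg[OF B_carrier B_nonneg x_carrier x_nonneg that] by simp_all
    show "(A *\<^sub>v x) $ i < t0 * (B *\<^sub>v x) $ i"
      using descent that M_mult_vec_index[OF x_carrier that] by auto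
  qed
  then have "rCW A B x < ereal t0"
    unfolding rCW_def using lessThan_m_nonempty by (subst Max_less_iff) auto
  then show False using rho_hat_le_rCW[OF x] rho_hat_eq by simp
qed

lemma weakly_optimal_iff:
  "weakly_optimal A B x \<longleftrightarrow> admissible A x \<and> (\<forall>i<m. (M *\<^sub>v x) $ i \<le> 0)"
  unfolding weakly_optimal_def rho_hat_eq
  using rCW_le_iff rho_hat_le_rCW rho_hat_eq by (metis order.antisym order.refl)

lemma weakly_optimal_carrier: "weakly_optimal A B y \<Longrightarrow> y \<in> carrier_vec n"
  and weakly_optimal_nonneg: "weakly_optimal A B y \<Longrightarrow> j < n \<Longrightarrow> 0 \<le> y $ j"
  and weakly_optimal_M_nonpos: "weakly_optimal A B y \<Longrightarrow> i < m \<Longrightarrow> (M *\<^sub>v y) $ i \<le> 0"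
  by (auto simp: weakly_optimal_iff admissible_iff nonneg_vec_def)

lemma mem_supp_iff: "y \<in> carrier_vec n \<Longrightarrow> j \<in> supp y \<longleftrightarrow> j < n \<and> 0 < y $ j"
  unfolding supp_def by auto

lemma supp_subset: "y \<in> carrier_vec n \<Longrightarrow> supp y \<subseteq> {..<n}"
  unfolding supp_def by auto

lemma weakly_optimal_zero_outside_supp:
  "weakly_optimal A B y \<Longrightarrow> j < n \<Longrightarrow> j \<notin> supp y \<Longrightarrow> y $ j = 0"
  using weakly_optimal_nonneg weakly_optimal_carrier mem_supp_iff by force

lemma weakly_optimal_supp_nonempty:
  assumes y: "weakly_optimal A B y"
  shows "supp y \<noteq> {}"
proof
  assume "supp y = {}"
  then have "y = 0\<^sub>v n"
    using y weakly_optimal_carrier weakly_optimal_zero_outside_supp by (intro eq_vecI) auto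
  then show False using y by (simp add: weakly_optimal_iff admissible_iff)
qed

lemma no_descent_direction:
  assumes y: "weakly_optimal A B y" and z: "z \<in> carrier_vec n"
    and z_supp: "\<forall>j<n. j \<notin> supp y \<longrightarrow> z $ j = 0"
    and descent: "\<forall>i\<in>active y. (M *\<^sub>v z) $ i < 0"
  shows False
proof -
  let ?S = "supp y" and ?N = "{i. i < m \<and> (M *\<^sub>v y) $ i < 0}"
  have y_carrier: "y \<in> carrier_vec n" using weakly_optimal_carrier[OF y] .
  have "finite ?S" using supp_subset[OF y_carrier] finite_subset by blast
  then have "\<forall>\<^sub>F e in at_right 0. \<forall>j\<in>?S. 0 < y $ j + e * z $ j"
    by (rule eventually_pos_affine) (simp add: supp_def)
  moreover have "\<forall>\<^sub>F e in at_right 0. \<forall>i\<in>?N. 0 < - (M *\<^sub>v y) $ i + e * - (M *\<^sub>v z) $ i"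
    by (rule eventually_pos_affine) auto
  ultimately obtain e where e: "0 < e" "\<forall>j\<in>?S. 0 < y $ j + e * z $ j"
      "\<forall>i\<in>?N. 0 < - (M *\<^sub>v y) $ i + e * - (M *\<^sub>v z) $ i"
    using eventually_happens'[OF trivial_limit_at_right_real
        eventually_conj[OF eventually_at_right_less eventually_conj]] by blast
  define x where "x = y + e \<cdot>\<^sub>v z"
  have x_index: "x $ j = y $ j + e * z $ j" if "j < n" for j
    using that y_carrier z unfolding x_def by simp
  have "0 \<le> x $ j" if "j < n" for j
    using e(2) x_index[OF that] z_supp weakly_optimal_zero_outside_supp[OF y that] that
    by (cases "j \<in> ?S") (auto simp: less_imp_le)
  moreover obtain j where "j \<in> ?S" using weakly_optimal_supp_nonempty[OF y] by blast
  then have "x \<noteq> 0\<^sub>v n" using e(2) x_index supp_subset[OF y_carrier] by force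
  ultimately have "admissible A x"
    using y_carrier z unfolding x_def by (simp add: admissible_iff nonneg_vec_def)
  moreover have "(M *\<^sub>v x) $ i < 0" if "i < m" for i
  proof (cases "i \<in> active y")
    case True
    then show ?thesis
      using descent e(1) M_mult_add_smult[OF y_carrier z that] unfolding x_def active_def
      by (simp add: mult_pos_neg)
  next
    case False
    then have "i \<in> ?N" using weakly_optimal_M_nonpos[OF y that] that unfolding active_def by auto
    then have "0 < - (M *\<^sub>v y) $ i + e * - (M *\<^sub>v z) $ i" using e(3) by blast
    then show ?thesis using M_mult_add_smult[OF y_carrier z that] unfolding x_def by simp
  qed
  ultimately show False using admissible_not_descent by force
qed

section \<open>Moving along a direction inside the support\<close>

lemma exit_step:
  assumes y: "weakly_optimal A B y" and z: "z \<in> carrier_vec n"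
    and z_supp: "\<forall>j<n. j \<notin> supp y \<longrightarrow> z $ j = 0"
    and z_tight: "\<forall>i\<in>active y. (M *\<^sub>v z) $ i = 0"
    and z_neg: "\<exists>j<n. z $ j < 0"
  obtains s where "0 < s" "\<forall>j<n. 0 \<le> (y + s \<cdot>\<^sub>v z) $ j"
    "\<forall>i<m. (M *\<^sub>v (y + s \<cdot>\<^sub>v z)) $ i \<le> 0"
    "(\<exists>j\<in>supp y. (y + s \<cdot>\<^sub>v z) $ j = 0) \<or> (\<exists>i\<in>active (y + s \<cdot>\<^sub>v z). i \<notin> active y)"
proof -
  have y_carrier: "y \<in> carrier_vec n" using weakly_optimal_carrier[OF y] .
  define J where "J = {j. j < n \<and> z $ j < 0}"
  define R where "R = {i. i < m \<and> 0 < (M *\<^sub>v z) $ i}"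
  define K where "K = Inl ` J \<union> Inr ` R"
  \<comment> \<open>The coordinates in J and the slacks - (M y)_i of the rows in R, indexed together by
    Inl/Inr, are affine functions a k + s * b k of s that start positive and decrease.\<close>
  define a where "a = case_sum (\<lambda>j. y $ j) (\<lambda>i. - (M *\<^sub>v y) $ i)"
  define b where "b = case_sum (\<lambda>j. z $ j) (\<lambda>i. - (M *\<^sub>v z) $ i)"
  have J_supp: "J \<subseteq> supp y" unfolding J_def using z_supp by force
  have R_inactive: "(M *\<^sub>v y) $ i < 0" if "i \<in> R" for i
    using that z_tight weakly_optimal_M_nonpos[OF y] unfolding R_def active_def
    by (force simp: order.order_iff_strict)
  have "0 < a k \<and> b k < 0" if "k \<in> K" for k
    using that J_supp R_inactive mem_supp_iff[OF y_carrier]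
    unfolding K_def a_def b_def J_def R_def by auto
  moreover have "finite K" "K \<noteq> {}" unfolding K_def J_def R_def using z_neg by auto
  ultimately obtain s where s: "0 < s" "\<And>k. k \<in> K \<Longrightarrow> 0 \<le> a k + s * b k"
      "\<exists>k\<in>K. a k + s * b k = 0"
    using first_zero_crossing by metis
  have nonneg: "0 \<le> a k + s * b k" if "k \<in> Inl ` {..<n} \<union> Inr ` {..<m}" for k
  proof (cases "k \<in> K")
    case True
    then show ?thesis by (rule s(2))
  next
    case False
    then have "0 \<le> a k" "0 \<le> b k"
      using that weakly_optimal_nonneg[OF y] weakly_optimal_M_nonpos[OF y]
      unfolding K_def J_def R_def a_def b_def by auto
    then show ?thesis using s(1) by simp
  qed
  let ?x = "y + s \<cdot>\<^sub>v z"
  have x_index: "?x $ j = a (Inl j) + s * b (Inl j)" if "j < n" for j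
    using that y_carrier z unfolding a_def b_def by simp
  have Mx_index: "(M *\<^sub>v ?x) $ i = - (a (Inr i) + s * b (Inr i))" if "i < m" for i
    using M_mult_add_smult[OF y_carrier z that] unfolding a_def b_def by simp
  show ?thesis
  proof (rule that[OF s(1)])
    show "\<forall>j<n. 0 \<le> ?x $ j" using x_index nonneg by simp
    show "\<forall>i<m. (M *\<^sub>v ?x) $ i \<le> 0"
    proof (intro allI impI)
      fix i assume "i < m"
      then show "(M *\<^sub>v ?x) $ i \<le> 0" using Mx_index nonneg[of "Inr i"] by simp
    qed
    from s(3) show "(\<exists>j\<in>supp y. ?x $ j = 0) \<or> (\<exists>i\<in>active ?x. i \<notin> active y)"
      using J_supp R_inactive x_index Mx_index unfolding K_def J_def R_def active_def by fastforce
  qed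
qed

lemma supp_add_smult_subset:
  assumes y: "weakly_optimal A B y" and z: "z \<in> carrier_vec n"
    and z_supp: "\<forall>j<n. j \<notin> supp y \<longrightarrow> z $ j = 0"
  shows "supp (y + s \<cdot>\<^sub>v z) \<subseteq> supp y"
proof
  have x_carrier: "y + s \<cdot>\<^sub>v z \<in> carrier_vec n" using weakly_optimal_carrier[OF y] z by simp
  fix j assume "j \<in> supp (y + s \<cdot>\<^sub>v z)"
  then have j: "j < n" "0 < (y + s \<cdot>\<^sub>v z) $ j" using mem_supp_iff[OF x_carrier] by auto
  show "j \<in> supp y"
  proof (rule ccontr)
    assume "j \<notin> supp y"
    then have "(y + s \<cdot>\<^sub>v z) $ j = 0"
      using z_supp weakly_optimal_zero_outside_supp[OF y j(1)] j(1) z by simp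
    then show False using j(2) by simp
  qed
qed

lemma supp_add_smult_eq:
  assumes y: "weakly_optimal A B y" and z: "z \<in> carrier_vec n"
    and z_supp: "\<forall>j<n. j \<notin> supp y \<longrightarrow> z $ j = 0"
    and nonneg: "\<forall>j<n. 0 \<le> (y + s \<cdot>\<^sub>v z) $ j"
    and nonzero: "\<forall>j\<in>supp y. (y + s \<cdot>\<^sub>v z) $ j \<noteq> 0"
  shows "supp (y + s \<cdot>\<^sub>v z) = supp y"
proof
  have x_carrier: "y + s \<cdot>\<^sub>v z \<in> carrier_vec n" using weakly_optimal_carrier[OF y] z by simp
  show "supp y \<subseteq> supp (y + s \<cdot>\<^sub>v z)"
  proof
    fix j assume j: "j \<in> supp y"
    then have "j < n" using supp_subset[OF weakly_optimal_carrier[OF y]] by auto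
    then show "j \<in> supp (y + s \<cdot>\<^sub>v z)"
      using nonneg nonzero j mem_supp_iff[OF x_carrier] by (auto simp: order.order_iff_strict)
  qed
qed (rule supp_add_smult_subset[OF y z z_supp])

lemma active_add_smult_superset:
  assumes "y \<in> carrier_vec n" "z \<in> carrier_vec n" "\<forall>i\<in>active y. (M *\<^sub>v z) $ i = 0"
  shows "active y \<subseteq> active (y + s \<cdot>\<^sub>v z)"
  using assms M_mult_add_smult unfolding active_def by auto

lemma step_with_negative_entry:
  assumes y: "weakly_optimal A B y" and z: "z \<in> carrier_vec n"
    and z_supp: "\<forall>j<n. j \<notin> supp y \<longrightarrow> z $ j = 0"
    and z_indep: "\<forall>c. z \<noteq> c \<cdot>\<^sub>v y"
    and z_tight: "\<forall>i\<in>active y. (M *\<^sub>v z) $ i = 0"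
    and z_neg: "\<exists>j<n. z $ j < 0"
  shows "\<exists>s. weakly_optimal A B (y + s \<cdot>\<^sub>v z) \<and>
    (supp (y + s \<cdot>\<^sub>v z) \<subset> supp y \<or>
     supp (y + s \<cdot>\<^sub>v z) = supp y \<and> active y \<subset> active (y + s \<cdot>\<^sub>v z))"
proof -
  have y_carrier: "y \<in> carrier_vec n" using weakly_optimal_carrier[OF y] .
  obtain s where s: "0 < s" "\<forall>j<n. 0 \<le> (y + s \<cdot>\<^sub>v z) $ j"
      "\<forall>i<m. (M *\<^sub>v (y + s \<cdot>\<^sub>v z)) $ i \<le> 0"
      "(\<exists>j\<in>supp y. (y + s \<cdot>\<^sub>v z) $ j = 0) \<or> (\<exists>i\<in>active (y + s \<cdot>\<^sub>v z). i \<notin> active y)"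
    using exit_step[OF y z z_supp z_tight z_neg] by blast
  define x where "x = y + s \<cdot>\<^sub>v z"
  have x_carrier: "x \<in> carrier_vec n" using y_carrier z unfolding x_def by simp
  have supp_x: "supp x \<subseteq> supp y"
    unfolding x_def by (rule supp_add_smult_subset[OF y z z_supp])
  have x_nonneg: "\<forall>j<n. 0 \<le> x $ j" and x_M: "\<forall>i<m. (M *\<^sub>v x) $ i \<le> 0"
    using s(2,3) unfolding x_def by blast+
  have wo_x: "weakly_optimal A B x" if "x \<noteq> 0\<^sub>v n"
    using that x_carrier x_nonneg x_M by (simp add: weakly_optimal_iff admissible_iff nonneg_vec_def)
  have "weakly_optimal A B x \<and> (supp x \<subset> supp y \<or> supp x = supp y \<and> active y \<subset> active x)"
  proof (cases "\<exists>j\<in>supp y. x $ j = 0")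
    case True
    then obtain j where j: "j \<in> supp y" "x $ j = 0" by blast
    have "x \<noteq> 0\<^sub>v n"
    proof
      assume "x = 0\<^sub>v n"
      then have "z = (- 1 / s) \<cdot>\<^sub>v y"
        using add_smult_eq_zero_vec[OF y_carrier z] s(1) unfolding x_def by simp
      then show False using z_indep by blast
    qed
    moreover have "supp x \<subset> supp y"
      using supp_x j mem_supp_iff[OF x_carrier] by auto
    ultimately show ?thesis using wo_x by blast
  next
    case False
    have supp_eq: "supp x = supp y"
      using supp_add_smult_eq[OF y z z_supp s(2)] False unfolding x_def by blast
    obtain j where "j \<in> supp x" using supp_eq weakly_optimal_supp_nonempty[OF y] by blast
    then have "j < n" "0 < x $ j" using mem_supp_iff[OF x_carrier] by auto
    then have "x \<noteq> 0\<^sub>v n" by auto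
    moreover have "active y \<subset> active x"
    proof -
      obtain i where "i \<in> active x" "i \<notin> active y"
        using s(4) False by (simp only: x_def) blast
      then show ?thesis
        using active_add_smult_superset[OF y_carrier z z_tight] unfolding x_def by blast
    qed
    ultimately show ?thesis using wo_x supp_eq by blast
  qed
  then show ?thesis unfolding x_def by blast
qed

lemma step_along_direction:
  assumes y: "weakly_optimal A B y" and z: "z \<in> carrier_vec n"
    and z_supp: "\<forall>j<n. j \<notin> supp y \<longrightarrow> z $ j = 0"
    and z_indep: "\<forall>c. z \<noteq> c \<cdot>\<^sub>v y"
    and z_tight: "\<forall>i\<in>active y. (M *\<^sub>v z) $ i = 0"
  shows "\<exists>s. weakly_optimal A B (y + s \<cdot>\<^sub>v z) \<and>
    (supp (y + s \<cdot>\<^sub>v z) \<subset> supp y \<or>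
     supp (y + s \<cdot>\<^sub>v z) = supp y \<and> active y \<subset> active (y + s \<cdot>\<^sub>v z))"
proof (cases "\<exists>j<n. z $ j < 0")
  case True
  then show ?thesis using step_with_negative_entry[OF assms] by blast
next
  case False
  let ?z = "(- 1) \<cdot>\<^sub>v z"
  have z': "?z \<in> carrier_vec n" using z by simp
  have z'_supp: "\<forall>j<n. j \<notin> supp y \<longrightarrow> ?z $ j = 0" using z z_supp by simp
  have "\<exists>j<n. z $ j \<noteq> 0"
  proof (rule ccontr)
    assume "\<not> ?thesis"
    then have "z = 0 \<cdot>\<^sub>v y" using z weakly_optimal_carrier[OF y] by (intro eq_vecI) auto
    then show False using z_indep by blast
  qed
  then have z'_neg: "\<exists>j<n. ?z $ j < 0" using False z by force
  have z'_indep: "\<forall>c. ?z \<noteq> c \<cdot>\<^sub>v y"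
  proof (intro allI notI)
    fix c assume "?z = c \<cdot>\<^sub>v y"
    then have "(- 1) \<cdot>\<^sub>v ?z = (- c) \<cdot>\<^sub>v y" by (simp add: smult_smult_assoc)
    then show False using z_indep by (simp add: smult_smult_assoc)
  qed
  have z'_tight: "\<forall>i\<in>active y. (M *\<^sub>v ?z) $ i = 0"
    using z_tight z M_carrier unfolding active_def by (simp add: mult_mat_vec)
  obtain s where s: "weakly_optimal A B (y + s \<cdot>\<^sub>v ?z) \<and>
      (supp (y + s \<cdot>\<^sub>v ?z) \<subset> supp y \<or>
       supp (y + s \<cdot>\<^sub>v ?z) = supp y \<and> active y \<subset> active (y + s \<cdot>\<^sub>v ?z))"
    using step_with_negative_entry[OF y z' z'_supp z'_indep z'_tight z'_neg] by blast
  have flip: "y + s \<cdot>\<^sub>v ?z = y + (- s) \<cdot>\<^sub>v z" by (simp add: smult_smult_assoc)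
  show ?thesis using s unfolding flip by blast
qed

lemma minimal_kernel_parallel:
  assumes y: "minimal_weakly_optimal A B y" and z: "z \<in> carrier_vec n"
    and z_supp: "\<forall>j<n. j \<notin> supp y \<longrightarrow> z $ j = 0"
    and kernel: "\<forall>i<m. (M *\<^sub>v z) $ i = 0"
  shows "\<exists>c. z = c \<cdot>\<^sub>v y"
proof (rule ccontr)
  assume "\<nexists>c. z = c \<cdot>\<^sub>v y"
  moreover have y_wo: "weakly_optimal A B y"
    using y unfolding minimal_weakly_optimal_def by blast
  ultimately obtain s where s: "weakly_optimal A B (y + s \<cdot>\<^sub>v z)"
      "supp (y + s \<cdot>\<^sub>v z) \<subset> supp y \<or> active y \<subset> active (y + s \<cdot>\<^sub>v z)"
    using step_along_direction[OF y_wo z z_supp] kernel unfolding active_def by blast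
  have "active (y + s \<cdot>\<^sub>v z) = active y"
    using kernel M_mult_add_smult[OF weakly_optimal_carrier[OF y_wo] z] unfolding active_def by auto
  then show False using s y unfolding minimal_weakly_optimal_def by blast
qed

definition active_maximal :: "real vec \<Rightarrow> bool" where
  "active_maximal y \<longleftrightarrow> minimal_weakly_optimal A B y \<and>
     (\<forall>x. weakly_optimal A B x \<and> supp x = supp y \<longrightarrow> card (active x) \<le> card (active y))"

lemma active_subset: "active x \<subseteq> {..<m}"
  unfolding active_def by auto

lemma exists_active_maximal:
  assumes y: "minimal_weakly_optimal A B y"
  obtains x where "active_maximal x" "supp x = supp y"
proof -
  have "weakly_optimal A B y" using y unfolding minimal_weakly_optimal_def by blast
  moreover have "card (active x) < Suc m" for x
    using card_mono[OF _ active_subset, of x] by simp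
  ultimately obtain x where x: "weakly_optimal A B x" "supp x = supp y"
      "\<forall>x'. weakly_optimal A B x' \<and> supp x' = supp y \<longrightarrow> card (active x') \<le> card (active x)"
    using ex_has_greatest_nat[of "\<lambda>x. weakly_optimal A B x \<and> supp x = supp y" y "\<lambda>x. card (active x)"]
    by blast
  then have "active_maximal x"
    using y unfolding active_maximal_def minimal_weakly_optimal_def by auto
  then show ?thesis using that x(2) by blast
qed

lemma active_maximal_kernel_parallel:
  assumes y: "active_maximal y" and z: "z \<in> carrier_vec n"
    and z_supp: "\<forall>j<n. j \<notin> supp y \<longrightarrow> z $ j = 0"
    and z_tight: "\<forall>i\<in>active y. (M *\<^sub>v z) $ i = 0"
  shows "\<exists>c. z = c \<cdot>\<^sub>v y"
proof (rule ccontr)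
  assume "\<nexists>c. z = c \<cdot>\<^sub>v y"
  moreover have y_wo: "weakly_optimal A B y"
    using y unfolding active_maximal_def minimal_weakly_optimal_def by blast
  ultimately obtain x where x: "weakly_optimal A B x"
      "supp x \<subset> supp y \<or> supp x = supp y \<and> active y \<subset> active x"
    using step_along_direction[OF y_wo z z_supp _ z_tight] by blast
  have "card (active y) < card (active x)" if "active y \<subset> active x"
    using psubset_card_mono[OF finite_subset[OF active_subset] that] by simp
  then show False
    using x y unfolding active_maximal_def minimal_weakly_optimal_def by fastforce
qed

section \<open>Rank of the active submatrix\<close>

lemma submatrix_M_carrier:
  assumes "R \<subseteq> {..<m}" "S \<subseteq> {..<n}"
  shows "submatrix M R S \<in> carrier_mat (card R) (card S)"
proof -
  have "{i. i < m \<and> i \<in> R} = R" "{j. j < n \<and> j \<in> S} = S" using assms by auto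
  then show ?thesis using submatrix_carrier_mat[OF M_carrier, of R S] by (simp only:)
qed

lemma submatrix_M_mult_vec:
  assumes R: "R \<subseteq> {..<m}" and i: "i \<in> R" and S: "S \<subseteq> {..<n}"
    and u: "u \<in> carrier_vec (card S)"
  shows "card {a\<in>R. a < i} < card R"
    and "(submatrix M R S *\<^sub>v u) $ card {a\<in>R. a < i} = (M *\<^sub>v embed_vec n S u) $ i"
proof -
  show k: "card {a\<in>R. a < i} < card R"
    using R i finite_subset by (intro card_less_in_set_less) auto
  have "{j. j < m \<and> j \<in> R} = R" using R by auto
  then show "(submatrix M R S *\<^sub>v u) $ card {a\<in>R. a < i} = (M *\<^sub>v embed_vec n S u) $ i"
    using submatrix_mult_embed_vec[OF M_carrier S u, of "card {a\<in>R. a < i}" R] k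
      pick_card_in_set[OF i] by simp
qed

lemma rank_submatrix_M_less:
  assumes y: "weakly_optimal A B y" and R: "active y \<subseteq> R" "R \<subseteq> {..<m}"
  shows "vec_space.rank (card R) (submatrix M R (supp y)) < card R"
proof (rule ccontr)
  let ?S = "supp y"
  have S: "?S \<subseteq> {..<n}" using supp_subset[OF weakly_optimal_carrier[OF y]] .
  note X = submatrix_M_carrier[OF R(2) S]
  assume "\<not> ?thesis"
  then have "vec_space.rank (card R) (submatrix M R ?S) = card R"
    using vec_space.rank_le_dim_row[OF X] by linarith
  then obtain u where u: "u \<in> carrier_vec (card ?S)"
      "submatrix M R ?S *\<^sub>v u = vec (card R) (\<lambda>_. - 1)"
    using vec_space.full_rank_imp_solvable[OF X] by (metis vec_carrier)
  have "(M *\<^sub>v embed_vec n ?S u) $ i < 0" if "i \<in> active y" for i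
  proof -
    have i: "i \<in> R" using that R(1) by blast
    have "(M *\<^sub>v embed_vec n ?S u) $ i = (submatrix M R ?S *\<^sub>v u) $ card {a\<in>R. a < i}"
      using submatrix_M_mult_vec(2)[OF R(2) i S u(1)] by simp
    also have "\<dots> = - 1" using u(2) submatrix_M_mult_vec(1)[OF R(2) i S u(1)] by simp
    finally show ?thesis by simp
  qed
  then show False
    using no_descent_direction[OF y embed_vec_carrier] embed_vec_outside by blast
qed

lemma rank_submatrix_M_ge:
  assumes y: "active_maximal y" and R: "active y \<subseteq> R" "R \<subseteq> {..<m}"
  shows "card (supp y) - 1 \<le> vec_space.rank (card R) (submatrix M R (supp y))"
proof (rule ccontr)
  let ?S = "supp y" and ?l = "card (supp y)"
  have y_wo: "weakly_optimal A B y"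
    using y unfolding active_maximal_def minimal_weakly_optimal_def by blast
  have y_carrier: "y \<in> carrier_vec n" using weakly_optimal_carrier[OF y_wo] .
  have S: "?S \<subseteq> {..<n}" using supp_subset[OF y_carrier] .
  assume "\<not> ?thesis"
  then obtain u where u: "u \<in> carrier_vec ?l" "u \<noteq> 0\<^sub>v ?l" "u $ (?l - 1) = 0"
      "submatrix M R ?S *\<^sub>v u = 0\<^sub>v (card R)"
    using kernel_vanishing_last_if_rank_less[OF submatrix_M_carrier[OF R(2) S]] by auto
  let ?z = "embed_vec n ?S u"
  have "(M *\<^sub>v ?z) $ i = 0" if "i \<in> active y" for i
  proof -
    have i: "i \<in> R" using that R(1) by blast
    have "(M *\<^sub>v ?z) $ i = (submatrix M R ?S *\<^sub>v u) $ card {a\<in>R. a < i}"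
      using submatrix_M_mult_vec(2)[OF R(2) i S u(1)] by simp
    also have "\<dots> = 0" using u(4) submatrix_M_mult_vec(1)[OF R(2) i S u(1)] by simp
    finally show ?thesis .
  qed
  then obtain c where c: "?z = c \<cdot>\<^sub>v y"
    using active_maximal_kernel_parallel[OF y embed_vec_carrier, of ?S u]
      embed_vec_outside[of _ n ?S u] by blast
  have "0 < ?l"
    using weakly_optimal_supp_nonempty[OF y_wo] S finite_subset by (auto simp: card_gt_0_iff)
  then have "pick ?S (?l - 1) \<in> ?S" by (intro pick_in_set) simp
  moreover have "?z $ pick ?S (?l - 1) = 0"
    using embed_vec_pick[OF S, of "?l - 1" u] u(3) \<open>0 < ?l\<close> by simp
  \<comment> \<open>?z vanishes at the last point of supp y, where y is positive.\<close>
  ultimately have "c = 0"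
    using c S y_carrier by (auto simp: supp_def)
  then have "u $ k = 0" if "k < ?l" for k
    using c embed_vec_pick[OF S that, of u] pick_in_set[of k ?S] that S y_carrier by auto
  then show False using u(1,2) by (auto intro: eq_vecI)
qed

lemma card_supp_le_card_active:
  assumes y: "active_maximal y"
  shows "card (supp y) \<le> card (active y)"
proof -
  have "weakly_optimal A B y"
    using y unfolding active_maximal_def minimal_weakly_optimal_def by blast
  then show ?thesis
    using rank_submatrix_M_ge[OF y order.refl active_subset]
      rank_submatrix_M_less[OF _ order.refl active_subset] by fastforce
qed

lemma col_submatrix_diff:
  "col_submatrix A S - t0 \<cdot>\<^sub>m col_submatrix B S = submatrix M {..<m} S"
  using A_carrier B_carrier
  by (intro eq_matI) (auto simp: col_submatrix_def M_def dim_submatrix submatrix_index pick_le)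

lemma weakly_optimal_tight_row:
  assumes y: "weakly_optimal A B y"
  shows "\<exists>i<m. ((A - t0 \<cdot>\<^sub>m B) *\<^sub>v y) $ i = 0"
proof -
  obtain i where "i < m" "0 \<le> (M *\<^sub>v y) $ i"
    using admissible_not_descent y unfolding weakly_optimal_iff by blast
  then show ?thesis
    using weakly_optimal_M_nonpos[OF y] unfolding M_def by (intro exI[of _ i]) force
qed

lemma rank_weakly_optimal_less:
  assumes "weakly_optimal A B y"
  shows "vec_space.rank m (col_submatrix A (supp y) - t0 \<cdot>\<^sub>m col_submatrix B (supp y)) < m"
  using rank_submatrix_M_less[OF assms active_subset order.refl]
  unfolding col_submatrix_diff by simp

lemma card_supp_minimal_le:
  assumes "minimal_weakly_optimal A B y"
  shows "card (supp y) \<le> m"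
proof -
  obtain x where x: "active_maximal x" "supp x = supp y"
    using exists_active_maximal[OF assms] .
  have "card (active x) \<le> m"
    using card_mono[OF _ active_subset, of x] by simp
  then show ?thesis using card_supp_le_card_active[OF x(1)] x(2) by simp
qed

lemma minimal_full_support_eigenvector:
  assumes y: "minimal_weakly_optimal A B y" and l: "card (supp y) = m"
  shows "weak_GPF_eigenvector A B y \<and> A *\<^sub>v y = t0 \<cdot>\<^sub>v (B *\<^sub>v y) \<and>
    vec_space.rank m (col_submatrix A (supp y) - t0 \<cdot>\<^sub>m col_submatrix B (supp y)) = m - 1"
proof -
  have y_wo: "weakly_optimal A B y" using y unfolding minimal_weakly_optimal_def by blast
  have y_carrier: "y \<in> carrier_vec n" using weakly_optimal_carrier[OF y_wo] .
  obtain x where x: "active_maximal x" "supp x = supp y"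
    using exists_active_maximal[OF y] .
  have x_wo: "weakly_optimal A B x"
    using x(1) unfolding active_maximal_def minimal_weakly_optimal_def by blast
  have x_carrier: "x \<in> carrier_vec n" using weakly_optimal_carrier[OF x_wo] .
  have "m \<le> card (active x)" using card_supp_le_card_active[OF x(1)] x(2) l by simp
  then have "active x = {..<m}"
    using active_subset card_seteq[of "{..<m}" "active x"] by simp
  then have "\<forall>i<m. (M *\<^sub>v x) $ i = 0" unfolding active_def by auto
  moreover have "\<forall>j<n. j \<notin> supp y \<longrightarrow> x $ j = 0"
    using weakly_optimal_zero_outside_supp[OF x_wo] x(2) by blast
  ultimately obtain c where c: "x = c \<cdot>\<^sub>v y"
    using minimal_kernel_parallel[OF y x_carrier] by blast
  have "c \<noteq> 0"
    using x_wo c y_carrier unfolding weakly_optimal_iff admissible_iff by auto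
  have "(M *\<^sub>v y) $ i = 0" if "i < m" for i
  proof -
    have "c * (M *\<^sub>v y) $ i = 0"
      using \<open>\<forall>i<m. (M *\<^sub>v x) $ i = 0\<close> that c y_carrier M_carrier by (simp add: mult_mat_vec)
    then show ?thesis using \<open>c \<noteq> 0\<close> by simp
  qed
  then have eigen: "A *\<^sub>v y = t0 \<cdot>\<^sub>v (B *\<^sub>v y)"
    using eigen_iff_M_kernel[OF y_carrier] by simp
  moreover have "weak_GPF_eigenvector A B y"
    using y_wo eigen rho_hat_finite unfolding weak_GPF_eigenvector_def weakly_optimal_def t0_def
    by simp
  moreover have "vec_space.rank m (submatrix M {..<m} (supp y)) = m - 1"
    using rank_submatrix_M_less[OF y_wo active_subset order.refl]
      rank_submatrix_M_ge[OF x(1) active_subset order.refl] x(2) l by simp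
  ultimately show ?thesis unfolding col_submatrix_diff by simp
qed

lemma minimal_exists_tight_rows:
  assumes "minimal_weakly_optimal A B y'"
  shows "\<exists>y. minimal_weakly_optimal A B y \<and> supp y = supp y' \<and>
    card {k. k < m \<and> (A *\<^sub>v y) $ k = t0 * (B *\<^sub>v y) $ k} \<ge> card (supp y')"
proof -
  obtain y where y: "active_maximal y" "supp y = supp y'"
    using exists_active_maximal[OF assms] .
  have "active y = {k. k < m \<and> (A *\<^sub>v y) $ k = t0 * (B *\<^sub>v y) $ k}"
    using M_mult_vec_index weakly_optimal_carrier y(1)
    unfolding active_def active_maximal_def minimal_weakly_optimal_def by auto
  then show ?thesis
    using card_supp_le_card_active[OF y(1)] y unfolding active_maximal_def by auto
qed

end

theorem theorem5p1:
  fixes A B :: "real mat" and m n :: nat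
  assumes "m \<ge> 1" and "n \<ge> 1"
    and "A \<in> carrier_mat m n" and "B \<in> carrier_mat m n"
    and "nonneg_mat A" and "nonneg_mat B"
    and "rho_hat A B < \<infinity>"
  defines "t0 \<equiv> real_of_ereal (rho_hat A B)"
  shows
    "(\<forall>y. weakly_optimal A B y \<longrightarrow> (\<exists>i < m. ((A - t0 \<cdot>\<^sub>m B) *\<^sub>v y) $ i = 0))
   \<and> (\<forall>y. weakly_optimal A B y \<and> card (supp y) \<ge> m \<longrightarrow>
        vec_space.rank m (col_submatrix A (supp y) - t0 \<cdot>\<^sub>m col_submatrix B (supp y)) < m)
   \<and> (\<forall>y. minimal_weakly_optimal A B y \<longrightarrow> card (supp y) \<le> m)
   \<and> (\<forall>y. minimal_weakly_optimal A B y \<and> card (supp y) = m \<longrightarrow>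
        weak_GPF_eigenvector A B y \<and> A *\<^sub>v y = t0 \<cdot>\<^sub>v (B *\<^sub>v y) \<and>
        vec_space.rank m (col_submatrix A (supp y) - t0 \<cdot>\<^sub>m col_submatrix B (supp y)) = m - 1)
   \<and> (\<forall>y'. minimal_weakly_optimal A B y' \<and> card (supp y') < m \<longrightarrow>
        (\<exists>y. minimal_weakly_optimal A B y \<and> supp y = supp y' \<and>
             card {k. k < m \<and> (A *\<^sub>v y) $ k = t0 * (B *\<^sub>v y) $ k} \<ge> card (supp y')))"
proof -
  have cw: "cw_setting A B m n"
    by unfold_locales (use assms in auto)
  have "t0 = cw_setting.t0 A B"
    unfolding t0_def cw_setting.t0_def[OF cw] ..
  then show ?thesis
    using cw_setting.weakly_optimal_tight_row[OF cw] cw_setting.rank_weakly_optimal_less[OF cw]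
      cw_setting.card_supp_minimal_le[OF cw] cw_setting.minimal_full_support_eigenvector[OF cw]
      cw_setting.minimal_exists_tight_rows[OF cw]
    by simp
qed

end
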